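(* Let $\alpha>1$ and let $f:\mathbb{D}\to\mathbb{C}$ be analytic (respectively $f:\mathbb{D}\to\mathbb{D}$ analytic). For $t>0$ let $A(t)=\mathbb{A}_E(f(B_H(0,t)))$ (respectively $A(t)=\mathbb{A}_H(f(B_H(0,t)))$), where $B_H(0,t)=\{z\in\mathbb{D}:d_H(0,z)<t\}$. Suppose $\int_1^\infty A(t)\,t^{-\alpha}\,dt<\infty$. Then for every $\theta\in\mathbb{R}$, with $\gamma(t)=\tanh(\frac t2)e^{i\theta}$ and $L(\rho_0)=\int_0^{\rho_0}\|f'(\gamma(t))\|_{H\to E}\,dt$ (respectively $\int_0^{\rho_0}\|f'(\gamma(t))\|_{H\to H}\,dt$), we have $$L(\rho_0)=o(\rho_0^{\alpha/2})\quad\text{as }\rho_0\to\infty.$$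
   Context: $\mathbb{D}=\{|z|<1\}$ carries the hyperbolic metric with density $\lambda_H(z)=2/(1-|z|^2)$ and distance $d_H$; $\mathbb{C}$ carries the Euclidean metric. $\|f'(z)\|_{H\to E}=|f'(z)|/\lambda_H(z)$, $\|f'(z)\|_{H\to H}=|f'(z)|\lambda_H(f(z))/\lambda_H(z)$. For $\Omega\subseteq\mathbb{D}$, $\mathbb{A}_E(f(\Omega))=\int_\Omega|f'|^2\,dx\,dy$ and $\mathbb{A}_H(f(\Omega))=\int_\Omega|f'(z)|^2\lambda_H(f(z))^2\,dx\,dy$ (areas counting multiplicity). *)

theory Defs
  imports "HOL-Analysis.Analysis" "HOL-Library.Landau_Symbols"
begin

definition lambdaH :: "complex \<Rightarrow> real" where
  "lambdaH z = 2 / (1 - (cmod z)^2)"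

text \<open>Hyperbolic distance induced by lambda_H (curvature -1).\<close>
definition hdist :: "complex \<Rightarrow> complex \<Rightarrow> real" where
  "hdist z w = 2 * artanh (cmod ((z - w) / (1 - cnj w * z)))"

definition hball0 :: "real \<Rightarrow> complex set" where
  "hball0 t = {z \<in> ball 0 1. hdist 0 z < t}"

text \<open>Euclidean area of f(Omega), counting multiplicity.\<close>
definition areaE :: "(complex \<Rightarrow> complex) \<Rightarrow> complex set \<Rightarrow> ennreal" where
  "areaE f \<Omega> = (\<integral>\<^sup>+ z. ennreal ((cmod (deriv f z))^2) * indicator \<Omega> z \<partial>lborel)"

text \<open>Hyperbolic area of f(Omega), counting multiplicity.\<close>
definition areaH :: "(complex \<Rightarrow> complex) \<Rightarrow> complex set \<Rightarrow> ennreal" where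
  "areaH f \<Omega> = (\<integral>\<^sup>+ z. ennreal ((cmod (deriv f z))^2 * (lambdaH (f z))^2)
                        * indicator \<Omega> z \<partial>lborel)"

definition normHE :: "(complex \<Rightarrow> complex) \<Rightarrow> complex \<Rightarrow> real" where
  "normHE f z = cmod (deriv f z) / lambdaH z"

definition normHH :: "(complex \<Rightarrow> complex) \<Rightarrow> complex \<Rightarrow> real" where
  "normHH f z = cmod (deriv f z) * lambdaH (f z) / lambdaH z"

definition hray :: "real \<Rightarrow> real \<Rightarrow> complex" where
  "hray \<theta> t = complex_of_real (tanh (t / 2)) * cis \<theta>"

end

theory Submission
  imports Defs "HOL-Complex_Analysis.Complex_Analysis"
begin

text \<open>
  The integrand along the ray is controlled pointwise by a sub-mean-value inequality on
  squares: integrating Cauchy's formula over the boundaries of the concentric squares of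
  half-side s in [r/2, r] and applying Fubini gives |H c| r^2 <= 3 * (integral of |H| over
  the square). Applied to f'^2, or in the hyperbolic case to the derivative of f followed
  by the disc automorphism moving f z to 0, it bounds the squared integrand at z by a
  constant times the area integral over a square of side comparable to 1 - |z|.
  For t in [k, k+1] these squares lie in the annulus between hyperbolic radii k - 1 and
  k + 2. The annuli overlap at most three times, so by Cauchy-Schwarz
  L(n)^2 <= 3 C n A(n+1). Monotonicity of A gives
  A(tau) <= 2^alpha tau^(alpha-1) * (integral of A(t) t^(-alpha) over [tau, oo)), and the
  tail of this convergent integral tends to 0; hence L(rho)^2 = o(rho^alpha).
\<close>

section \<open>Lebesgue measure on \<open>\<complex>\<close> as a product measure\<close>

lemma measurable_Complex_pair [measurable]:
  "(\<lambda>p. Complex (fst p) (snd p)) \<in> borel_measurable (lborel \<Otimes>\<^sub>M (lborel :: real measure))"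
proof -
  have "(\<lambda>p. Complex (fst p) (snd p)) = (\<lambda>p. of_real (fst p) + \<i> * of_real (snd p))"
    by (simp add: Complex_eq)
  also have "\<dots> \<in> borel_measurable (lborel \<Otimes>\<^sub>M (lborel :: real measure))"
    by measurable
  finally show ?thesis .
qed

lemma measurable_Complex_pair_swap [measurable]:
  "(\<lambda>p. Complex (snd p) (fst p)) \<in> borel_measurable (lborel \<Otimes>\<^sub>M (lborel :: real measure))"
proof -
  have "(\<lambda>p. Complex (snd p) (fst p)) = (\<lambda>p. of_real (snd p) + \<i> * of_real (fst p))"
    by (simp add: Complex_eq)
  also have "\<dots> \<in> borel_measurable (lborel \<Otimes>\<^sub>M (lborel :: real measure))"
    by measurable
  finally show ?thesis .
qed

lemma lborel_complex_eq_distr: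
  "(lborel :: complex measure) = distr (lborel \<Otimes>\<^sub>M lborel) borel (\<lambda>(x, y). Complex x y)"
proof (rule lborel_eqI)
  fix l u :: complex
  assume le: "\<And>b. b \<in> Basis \<Longrightarrow> l \<bullet> b \<le> u \<bullet> b"
  then have "Re l \<le> Re u" "Im l \<le> Im u"
    using le[of 1] le[of \<i>] by (auto simp: Basis_complex_def)
  moreover have "(\<lambda>(x, y). Complex x y) -` box l u \<inter> space (lborel \<Otimes>\<^sub>M lborel)
                   = {Re l<..<Re u} \<times> {Im l<..<Im u}"
    by (auto simp: in_box_complex_iff space_pair_measure)
  ultimately show "emeasure (distr (lborel \<Otimes>\<^sub>M lborel) borel (\<lambda>(x, y). Complex x y)) (box l u)
                     = (\<Prod>b\<in>Basis. (u - l) \<bullet> b)"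
    by (subst emeasure_distr) (auto simp: case_prod_unfold lborel.emeasure_pair_measure_Times
                                     Basis_complex_def ennreal_mult inner_complex_def)
qed simp

lemma nn_integral_complex_iterated:
  fixes F :: "complex \<Rightarrow> ennreal"
  assumes [measurable]: "F \<in> borel_measurable borel"
  shows "(\<integral>\<^sup>+ z. F z \<partial>lborel) = (\<integral>\<^sup>+ x. \<integral>\<^sup>+ y. F (Complex x y) \<partial>lborel \<partial>lborel)"
proof -
  have meas: "(\<lambda>(x, y). Complex x y) \<in> (lborel \<Otimes>\<^sub>M (lborel :: real measure)) \<rightarrow>\<^sub>M borel"
    by (simp add: case_prod_unfold)
  have "(\<integral>\<^sup>+ z. F z \<partial>lborel) = (\<integral>\<^sup>+ p. F (case p of (x, y) \<Rightarrow> Complex x y) \<partial>(lborel \<Otimes>\<^sub>M lborel))"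
    by (subst lborel_complex_eq_distr) (simp add: nn_integral_distr[OF meas])
  also have "\<dots> = (\<integral>\<^sup>+ x. \<integral>\<^sup>+ y. F (Complex x y) \<partial>lborel \<partial>lborel)"
    by (subst lborel.nn_integral_fst[symmetric]) (auto simp: case_prod_unfold)
  finally show ?thesis .
qed

lemma nn_integral_complex_iterated_swap:
  fixes F :: "complex \<Rightarrow> ennreal"
  assumes [measurable]: "F \<in> borel_measurable borel"
  shows "(\<integral>\<^sup>+ z. F z \<partial>lborel) = (\<integral>\<^sup>+ y. \<integral>\<^sup>+ x. F (Complex x y) \<partial>lborel \<partial>lborel)"
proof -
  have "(\<integral>\<^sup>+ y. \<integral>\<^sup>+ x. F (Complex x y) \<partial>lborel \<partial>lborel) = (\<integral>\<^sup>+ x. \<integral>\<^sup>+ y. F (Complex x y) \<partial>lborel \<partial>lborel)"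
    by (rule lborel_pair.Fubini') (simp add: case_prod_unfold)
  then show ?thesis using nn_integral_complex_iterated[OF assms] by simp
qed

lemma measurable_nn_integral_vertical:
  fixes F :: "complex \<Rightarrow> ennreal"
  assumes [measurable]: "F \<in> borel_measurable borel"
  shows "(\<lambda>x. \<integral>\<^sup>+ y. F (Complex x y) \<partial>lborel) \<in> borel_measurable borel"
  by (rule lborel.borel_measurable_nn_integral) (simp add: case_prod_unfold)

lemma measurable_nn_integral_horizontal:
  fixes F :: "complex \<Rightarrow> ennreal"
  assumes [measurable]: "F \<in> borel_measurable borel"
  shows "(\<lambda>y. \<integral>\<^sup>+ x. F (Complex x y) \<partial>lborel) \<in> borel_measurable borel"
  by (rule lborel.borel_measurable_nn_integral) (simp add: case_prod_unfold)

section \<open>A sub-mean-value inequality on squares\<close>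

abbreviation csquare :: "complex \<Rightarrow> real \<Rightarrow> complex set" where
  "csquare c r \<equiv> cbox (c - Complex r r) (c + Complex r r)"

lemma integral_unit_interval_affine:
  fixes \<xi> :: "real \<Rightarrow> real"
  assumes "ua < ub" and "\<xi> integrable_on {ua..ub}"
  shows "integral {0..1} (\<lambda>t. \<xi> ((ub - ua) * t + ua) * (ub - ua)) = integral {ua..ub} \<xi>"
proof -
  define m where "m = ub - ua"
  have m: "m > 0" using assms(1) by (simp add: m_def)
  have "(\<xi> has_integral integral {ua..ub} \<xi>) (cbox ua ub)"
    using assms(2) by (simp add: integrable_integral)
  from has_integral_affinity'[OF this m, of ua]
  have "((\<lambda>x. \<xi> (m * x + ua)) has_integral (integral {ua..ub} \<xi> / m)) {0..1}"
    using m by (simp add: m_def divide_simps)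
  from has_integral_mult_left[OF this, of m] show ?thesis
    using m by (intro integral_unique) (simp add: m_def mult.commute)
qed

lemma norm_contour_integral_linepath_le_nn_integral:
  fixes g :: "complex \<Rightarrow> complex" and \<phi> :: "real \<Rightarrow> complex"
  assumes uab: "ua < ub" and lp: "\<And>t. linepath a b t = \<phi> (ub * t + ua * (1 - t))"
    and len: "cmod (b - a) = ub - ua"
    and cont: "continuous_on {ua..ub} (\<lambda>u. g (\<phi> u))"
  shows "ennreal (cmod (contour_integral (linepath a b) g))
          \<le> (\<integral>\<^sup>+ u. ennreal (cmod (g (\<phi> u))) * indicator {ua..ub} u \<partial>lborel)"
proof -
  define m where "m = ub - ua"
  define \<xi> where "\<xi> u = cmod (g (\<phi> u))" for u
  have cont_\<xi>: "continuous_on {ua..ub} \<xi>"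
    unfolding \<xi>_def by (intro continuous_intros cont)
  have aff: "\<And>t. ub * t + ua * (1 - t) = m * t + ua" by (simp add: m_def algebra_simps)
  have img: "(\<lambda>t. m * t + ua) ` {0..1} \<subseteq> {ua..ub}"
  proof (rule image_subsetI)
    fix t :: real assume "t \<in> {0..1}"
    then have "m * t \<le> m" "0 \<le> m * t" using uab mult_left_le[of t m] by (auto simp: m_def)
    then show "m * t + ua \<in> {ua..ub}" by (simp add: m_def)
  qed
  have cont_aff: "continuous_on {0..1} (\<lambda>t::real. m * t + ua)" by (intro continuous_intros)
  have "cmod (contour_integral (linepath a b) g)
          = cmod (integral {0..1} (\<lambda>t. g (linepath a b t) * (b - a)))"
    by (simp add: contour_integral_integral)
  also have "\<dots> \<le> integral {0..1} (\<lambda>t. \<xi> (m * t + ua) * m)"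
  proof (rule integral_norm_bound_integral)
    show "(\<lambda>t. g (linepath a b t) * (b - a)) integrable_on {0..1}"
      unfolding lp aff
      by (intro integrable_continuous_interval continuous_intros continuous_on_compose2[OF cont cont_aff img])
    show "(\<lambda>t. \<xi> (m * t + ua) * m) integrable_on {0..1}"
      by (intro integrable_continuous_interval continuous_intros continuous_on_compose2[OF cont_\<xi> cont_aff img])
  qed (simp add: lp aff \<xi>_def norm_mult len m_def)
  also have "\<dots> = integral {ua..ub} \<xi>"
    unfolding m_def by (rule integral_unit_interval_affine[OF uab integrable_continuous_interval[OF cont_\<xi>]])
  finally have le: "cmod (contour_integral (linepath a b) g) \<le> integral {ua..ub} \<xi>" .
  have "(\<integral>\<^sup>+ u. ennreal (indicator {ua..ub} u * \<xi> u) \<partial>lborel) = ennreal (integral {ua..ub} \<xi>)"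
    by (rule nn_integral_has_integral_lebesgue[OF _ integrable_integral[OF integrable_continuous_interval[OF cont_\<xi>]]])
       (simp add: \<xi>_def)
  moreover have "(\<integral>\<^sup>+ u. ennreal (indicator {ua..ub} u * \<xi> u) \<partial>lborel)
      = (\<integral>\<^sup>+ u. ennreal (cmod (g (\<phi> u))) * indicator {ua..ub} u \<partial>lborel)"
    by (intro nn_integral_cong) (auto simp: \<xi>_def indicator_def)
  ultimately show ?thesis using le by (metis ennreal_leI)
qed

lemma norm_contour_integral_linepath_Cauchy_kernel_le:
  fixes H :: "complex \<Rightarrow> complex" and \<phi> :: "real \<Rightarrow> complex"
  assumes uab: "ua < ub" and lp: "\<And>t. linepath a b t = \<phi> (ub * t + ua * (1 - t))"
    and len: "cmod (b - a) = ub - ua"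
    and cont_\<phi>: "continuous_on UNIV \<phi>" and cont_H: "continuous_on S H"
    and img: "\<phi> ` {ua..ub} \<subseteq> S"
    and \<sigma>: "\<sigma> > 0" and far: "\<And>u. u \<in> {ua..ub} \<Longrightarrow> \<sigma> \<le> cmod (\<phi> u - c)"
    and meas: "(\<lambda>z. ennreal (cmod (H z)) * indicator S z) \<in> borel_measurable borel"
  shows "ennreal (cmod (contour_integral (linepath a b) (\<lambda>w. H w / (w - c))))
          \<le> ennreal (1 / \<sigma>) * (\<integral>\<^sup>+ u. ennreal (cmod (H (\<phi> u))) * indicator S (\<phi> u) \<partial>lborel)"
proof -
  have "\<phi> u - c \<noteq> 0" if "u \<in> {ua..ub}" for u
    using far[OF that] \<sigma> by auto
  moreover have "continuous_on {ua..ub} (\<lambda>u. H (\<phi> u))"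
    by (rule continuous_on_compose2[OF cont_H continuous_on_subset[OF cont_\<phi>] img]) auto
  ultimately have "continuous_on {ua..ub} (\<lambda>u. H (\<phi> u) / (\<phi> u - c))"
    by (intro continuous_intros continuous_on_subset[OF cont_\<phi>]) auto
  then have "ennreal (cmod (contour_integral (linepath a b) (\<lambda>w. H w / (w - c))))
        \<le> (\<integral>\<^sup>+ u. ennreal (cmod (H (\<phi> u) / (\<phi> u - c))) * indicator {ua..ub} u \<partial>lborel)"
    by (rule norm_contour_integral_linepath_le_nn_integral[OF uab lp len])
  also have "\<dots> \<le> (\<integral>\<^sup>+ u. ennreal (1 / \<sigma>) * (ennreal (cmod (H (\<phi> u))) * indicator S (\<phi> u)) \<partial>lborel)"
  proof (rule nn_integral_mono)
    fix u :: real
    show "ennreal (cmod (H (\<phi> u) / (\<phi> u - c))) * indicator {ua..ub} u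
          \<le> ennreal (1 / \<sigma>) * (ennreal (cmod (H (\<phi> u))) * indicator S (\<phi> u))"
    proof (cases "u \<in> {ua..ub}")
      case True
      have "cmod (H (\<phi> u) / (\<phi> u - c)) = cmod (H (\<phi> u)) / cmod (\<phi> u - c)"
        by (simp add: norm_divide)
      also have "\<dots> \<le> cmod (H (\<phi> u)) / \<sigma>"
        using \<sigma> far[OF True] by (intro divide_left_mono mult_pos_pos) auto
      finally have "cmod (H (\<phi> u) / (\<phi> u - c)) \<le> (1 / \<sigma>) * cmod (H (\<phi> u))" by simp
      moreover have "\<phi> u \<in> S" using True img by auto
      ultimately show ?thesis
        using True \<sigma> by (simp add: ennreal_mult'[symmetric] ennreal_leI)
    qed simp
  qed
  also have "\<dots> = ennreal (1 / \<sigma>) * (\<integral>\<^sup>+ u. ennreal (cmod (H (\<phi> u))) * indicator S (\<phi> u) \<partial>lborel)"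
    using measurable_compose[OF borel_measurable_continuous_onI[OF cont_\<phi>] meas]
    by (intro nn_integral_cmult) simp
  finally show ?thesis .
qed

lemma norm_contour_integral_horizontal_Cauchy_kernel_le:
  fixes H :: "complex \<Rightarrow> complex"
  assumes "xa < xb" and "continuous_on S H" and "(\<lambda>x. Complex x y) ` {xa..xb} \<subseteq> S"
    and "\<sigma> > 0" and far: "\<sigma> \<le> \<bar>y - Im c\<bar>"
    and "(\<lambda>z. ennreal (cmod (H z)) * indicator S z) \<in> borel_measurable borel"
  shows "ennreal (cmod (contour_integral (linepath (Complex xa y) (Complex xb y)) (\<lambda>w. H w / (w - c))))
          \<le> ennreal (1 / \<sigma>) * (\<integral>\<^sup>+ x. ennreal (cmod (H (Complex x y))) * indicator S (Complex x y) \<partial>lborel)"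
proof (rule norm_contour_integral_linepath_Cauchy_kernel_le[where \<phi> = "\<lambda>x. Complex x y"])
  show "\<sigma> \<le> cmod (Complex x y - c)" for x
    using far abs_Im_le_cmod[of "Complex x y - c"] by simp
qed (use assms in \<open>auto simp: linepath_def complex_eq_iff algebra_simps cmod_def intro!: continuous_intros\<close>)

lemma norm_contour_integral_vertical_Cauchy_kernel_le:
  fixes H :: "complex \<Rightarrow> complex"
  assumes "ya < yb" and "continuous_on S H" and "(\<lambda>y. Complex x y) ` {ya..yb} \<subseteq> S"
    and "\<sigma> > 0" and far: "\<sigma> \<le> \<bar>x - Re c\<bar>"
    and "(\<lambda>z. ennreal (cmod (H z)) * indicator S z) \<in> borel_measurable borel"
  shows "ennreal (cmod (contour_integral (linepath (Complex x ya) (Complex x yb)) (\<lambda>w. H w / (w - c))))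
          \<le> ennreal (1 / \<sigma>) * (\<integral>\<^sup>+ y. ennreal (cmod (H (Complex x y))) * indicator S (Complex x y) \<partial>lborel)"
proof (rule norm_contour_integral_linepath_Cauchy_kernel_le[where \<phi> = "\<lambda>y. Complex x y"])
  show "\<sigma> \<le> cmod (Complex x y - c)" for y
    using far abs_Re_le_cmod[of "Complex x y - c"] by simp
qed (use assms in \<open>auto simp: linepath_def complex_eq_iff algebra_simps cmod_def intro!: continuous_intros\<close>)

lemma borel_measurable_norm_indicator:
  fixes H :: "'a::euclidean_space \<Rightarrow> 'b::real_normed_vector"
  assumes "continuous_on S H" and "S \<in> sets borel"
  shows "(\<lambda>z. ennreal (norm (H z)) * indicator S z) \<in> borel_measurable borel"
proof -
  have "(\<lambda>z. indicator S z *\<^sub>R H z) \<in> borel_measurable borel"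
    by (rule borel_measurable_continuous_on_indicator[OF assms(2,1)])
  then have "(\<lambda>z. ennreal (norm (indicator S z *\<^sub>R H z))) \<in> borel_measurable borel"
    by measurable
  also have "(\<lambda>z. ennreal (norm (indicator S z *\<^sub>R H z))) = (\<lambda>z. ennreal (norm (H z)) * indicator S z)"
    by (simp add: indicator_def fun_eq_iff)
  finally show ?thesis .
qed

lemma has_contour_integral_rectpath_sides:
  assumes cont: "continuous_on (path_image (rectpath a1 a3)) g"
  defines "a2 \<equiv> Complex (Re a3) (Im a1)" and "a4 \<equiv> Complex (Re a1) (Im a3)"
  shows "(g has_contour_integral (contour_integral (linepath a1 a2) g + (contour_integral (linepath a2 a3) g
           + (contour_integral (linepath a3 a4) g + contour_integral (linepath a4 a1) g)))) (rectpath a1 a3)"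
proof -
  have sides: "path_image (rectpath a1 a3) = closed_segment a1 a2 \<union> closed_segment a2 a3
                 \<union> closed_segment a3 a4 \<union> closed_segment a4 a1"
    by (simp add: rectpath_def Let_def path_image_join a2_def a4_def Un_assoc)
  have side_integral: "(g has_contour_integral contour_integral (linepath p q) g) (linepath p q)"
    if "closed_segment p q \<subseteq> path_image (rectpath a1 a3)" for p q
    by (intro has_contour_integral_integral contour_integrable_continuous_linepath
              continuous_on_subset[OF cont that])
  show ?thesis
    unfolding rectpath_def Let_def a2_def[symmetric] a4_def[symmetric]
    by (intro has_contour_integral_join side_integral valid_path_join) (auto simp: sides)
qed

lemma Cauchy_square_boundary_estimate:
  fixes H :: "complex \<Rightarrow> complex"
  assumes holo: "H holomorphic_on csquare c \<sigma>" and \<sigma>: "\<sigma> > 0"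
  defines "g \<equiv> \<lambda>w. H w / (w - c)"
    and "a1 \<equiv> Complex (Re c - \<sigma>) (Im c - \<sigma>)" and "a2 \<equiv> Complex (Re c + \<sigma>) (Im c - \<sigma>)"
    and "a3 \<equiv> Complex (Re c + \<sigma>) (Im c + \<sigma>)" and "a4 \<equiv> Complex (Re c - \<sigma>) (Im c + \<sigma>)"
  shows "2 * pi * cmod (H c)
           \<le> cmod (contour_integral (linepath a1 a2) g) + cmod (contour_integral (linepath a2 a3) g)
             + cmod (contour_integral (linepath a4 a3) g) + cmod (contour_integral (linepath a1 a4) g)"
proof -
  have "c - Complex \<sigma> \<sigma> = a1" "c + Complex \<sigma> \<sigma> = a3"
    by (simp_all add: a1_def a3_def complex_eq_iff)
  then have box_eq: "csquare c \<sigma> = cbox a1 a3" by simp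
  have le13: "Re a1 \<le> Re a3" "Im a1 \<le> Im a3" using \<sigma> by (auto simp: a1_def a3_def)
  have c_in: "c \<in> box a1 a3" using \<sigma> by (auto simp: a1_def a3_def in_box_complex_iff)
  have pim: "path_image (rectpath a1 a3) = cbox a1 a3 - box a1 a3"
    by (rule path_image_rectpath_cbox_minus_box[OF le13])
  have "(g has_contour_integral (2*pi * \<i> * winding_number (rectpath a1 a3) c * H c)) (rectpath a1 a3)"
    unfolding g_def
  proof (rule Cauchy_integral_formula_convex_simple)
    show "H holomorphic_on cbox a1 a3" using holo by (simp add: box_eq)
    show "c \<in> interior (cbox a1 a3)" using c_in by simp
    show "path_image (rectpath a1 a3) \<subseteq> cbox a1 a3 - {c}" using pim c_in by auto
  qed (auto simp: convex_box)
  then have Cauchy: "(g has_contour_integral (2*pi * \<i> * H c)) (rectpath a1 a3)"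
    using winding_number_rectpath[OF c_in] by simp
  have "continuous_on (path_image (rectpath a1 a3)) g"
    unfolding g_def
  proof (intro continuous_intros)
    show "continuous_on (path_image (rectpath a1 a3)) H"
      by (rule continuous_on_subset[OF holomorphic_on_imp_continuous_on[OF holo]])
         (auto simp: box_eq pim)
  qed (use pim c_in in auto)
  from has_contour_integral_rectpath_sides[OF this]
  have sum_eq: "contour_integral (linepath a1 a2) g + (contour_integral (linepath a2 a3) g
        + (contour_integral (linepath a3 a4) g + contour_integral (linepath a4 a1) g)) = 2*pi * \<i> * H c"
    using Cauchy has_contour_integral_unique by (simp add: a1_def a2_def a3_def a4_def)
  have "contour_integral (linepath a3 a4) g = - contour_integral (linepath a4 a3) g"
       "contour_integral (linepath a4 a1) g = - contour_integral (linepath a1 a4) g"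
    using contour_integral_reversepath[of "linepath a4 a3" g]
          contour_integral_reversepath[of "linepath a1 a4" g] by simp_all
  moreover have "2 * pi * cmod (H c) = cmod (2*pi * \<i> * H c)"
    by (simp add: norm_mult)
  ultimately show ?thesis
    unfolding sum_eq[symmetric] by (smt (verit) norm_minus_cancel norm_triangle_ineq)
qed

lemma Cauchy_square_boundary_nn_integral_estimate:
  fixes H :: "complex \<Rightarrow> complex"
  assumes holo: "H holomorphic_on csquare c r" and \<sigma>: "0 < \<sigma>" "\<sigma> \<le> r"
  defines "F \<equiv> \<lambda>z. ennreal (cmod (H z)) * indicator (csquare c r) z"
  shows "ennreal (2 * pi * cmod (H c)) \<le> ennreal (1 / \<sigma>) *
     ((\<integral>\<^sup>+ x. F (Complex x (Im c - \<sigma>)) \<partial>lborel) + (\<integral>\<^sup>+ y. F (Complex (Re c + \<sigma>) y) \<partial>lborel)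
      + (\<integral>\<^sup>+ x. F (Complex x (Im c + \<sigma>)) \<partial>lborel) + (\<integral>\<^sup>+ y. F (Complex (Re c - \<sigma>) y) \<partial>lborel))"
proof -
  define S where "S = csquare c r"
  define g where "g w = H w / (w - c)" for w
  define a1 where "a1 = Complex (Re c - \<sigma>) (Im c - \<sigma>)"
  define a2 where "a2 = Complex (Re c + \<sigma>) (Im c - \<sigma>)"
  define a3 where "a3 = Complex (Re c + \<sigma>) (Im c + \<sigma>)"
  define a4 where "a4 = Complex (Re c - \<sigma>) (Im c + \<sigma>)"
  have cont: "continuous_on S H"
    using holo holomorphic_on_imp_continuous_on by (auto simp: S_def)
  have meas: "(\<lambda>z. ennreal (cmod (H z)) * indicator S z) \<in> borel_measurable borel"
    by (rule borel_measurable_norm_indicator[OF cont]) (simp add: S_def borel_closed)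
  have "csquare c \<sigma> \<subseteq> S" using \<sigma> by (auto simp: S_def in_cbox_complex_iff)
  then have "2 * pi * cmod (H c)
           \<le> cmod (contour_integral (linepath a1 a2) g) + cmod (contour_integral (linepath a2 a3) g)
             + cmod (contour_integral (linepath a4 a3) g) + cmod (contour_integral (linepath a1 a4) g)"
    unfolding g_def a1_def a2_def a3_def a4_def
    using holo \<sigma> by (intro Cauchy_square_boundary_estimate) (auto simp: S_def elim: holomorphic_on_subset)
  then have "ennreal (2 * pi * cmod (H c))
      \<le> ennreal (cmod (contour_integral (linepath a1 a2) g)) + ennreal (cmod (contour_integral (linepath a2 a3) g))
        + ennreal (cmod (contour_integral (linepath a4 a3) g)) + ennreal (cmod (contour_integral (linepath a1 a4) g))"
    by (simp add: ennreal_plus[symmetric] del: ennreal_plus)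
  also have "\<dots> \<le> ennreal (1 / \<sigma>) * (\<integral>\<^sup>+ x. F (Complex x (Im c - \<sigma>)) \<partial>lborel)
      + ennreal (1 / \<sigma>) * (\<integral>\<^sup>+ y. F (Complex (Re c + \<sigma>) y) \<partial>lborel)
      + ennreal (1 / \<sigma>) * (\<integral>\<^sup>+ x. F (Complex x (Im c + \<sigma>)) \<partial>lborel)
      + ennreal (1 / \<sigma>) * (\<integral>\<^sup>+ y. F (Complex (Re c - \<sigma>) y) \<partial>lborel)"
    unfolding g_def F_def S_def[symmetric] a1_def a2_def a3_def a4_def
    using \<sigma>
    by (intro add_mono norm_contour_integral_horizontal_Cauchy_kernel_le[OF _ cont _ \<sigma>(1) _ meas]
                       norm_contour_integral_vertical_Cauchy_kernel_le[OF _ cont _ \<sigma>(1) _ meas])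
       (auto simp: S_def in_cbox_complex_iff)
  finally show ?thesis by (simp add: distrib_left)
qed

lemma nn_integral_lborel_translate:
  fixes P :: "real \<Rightarrow> ennreal"
  assumes [measurable]: "P \<in> borel_measurable borel"
  shows "(\<integral>\<^sup>+ s. P (a + s) \<partial>lborel) = integral\<^sup>N lborel P"
    and "(\<integral>\<^sup>+ s. P (a - s) \<partial>lborel) = integral\<^sup>N lborel P"
  using nn_integral_real_affine[of P 1 a] nn_integral_real_affine[of P "-1" a] by simp_all

lemma averaged_Cauchy_square_estimate:
  fixes H :: "complex \<Rightarrow> complex"
  assumes holo: "H holomorphic_on csquare c r" and r: "r > 0"
  defines "Q \<equiv> \<integral>\<^sup>+ z. ennreal (cmod (H z)) * indicator (csquare c r) z \<partial>lborel"
  shows "ennreal (2 * pi * cmod (H c)) * ennreal (r / 2) \<le> ennreal (2 / r) * (Q + Q + Q + Q)"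
proof -
  define F where "F z = ennreal (cmod (H z)) * indicator (csquare c r) z" for z
  have [measurable]: "F \<in> borel_measurable borel"
    unfolding F_def[abs_def] using holomorphic_on_imp_continuous_on[OF holo]
    by (rule borel_measurable_norm_indicator) (simp add: borel_closed)
  have Q_F: "Q = integral\<^sup>N lborel F" by (simp add: Q_def F_def[abs_def])
  define Px where "Px x = (\<integral>\<^sup>+ y. F (Complex x y) \<partial>lborel)" for x
  define Py where "Py y = (\<integral>\<^sup>+ x. F (Complex x y) \<partial>lborel)" for y
  have [measurable]: "Px \<in> borel_measurable borel" "Py \<in> borel_measurable borel"
    unfolding Px_def[abs_def] Py_def[abs_def]
    by (simp_all add: measurable_nn_integral_vertical measurable_nn_integral_horizontal)
  have Q_eq: "integral\<^sup>N lborel Px = Q" "integral\<^sup>N lborel Py = Q"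
    using nn_integral_complex_iterated[of F] nn_integral_complex_iterated_swap[of F]
    by (simp_all add: Q_F Px_def[abs_def] Py_def[abs_def])
  \<comment> \<open>averaged over \<open>\<sigma>\<close>, each side integral becomes an area integral by Fubini\<close>
  have "ennreal (2 * pi * cmod (H c)) * indicator {r/2..r} \<sigma>
      \<le> ennreal (2 / r) * (Py (Im c - \<sigma>) + Px (Re c + \<sigma>) + Py (Im c + \<sigma>) + Px (Re c - \<sigma>))" for \<sigma>
  proof (cases "\<sigma> \<in> {r/2..r}")
    case True
    then have \<sigma>: "0 < \<sigma>" "\<sigma> \<le> r" and "ennreal (1 / \<sigma>) \<le> ennreal (2 / r)"
      using r by (auto simp: field_simps intro!: ennreal_leI)
    have "ennreal (2 * pi * cmod (H c)) \<le> ennreal (1 / \<sigma>) * (Py (Im c - \<sigma>) + Px (Re c + \<sigma>) + Py (Im c + \<sigma>) + Px (Re c - \<sigma>))"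
      using Cauchy_square_boundary_nn_integral_estimate[OF holo \<sigma>]
      unfolding F_def[symmetric] Px_def Py_def .
    also have "\<dots> \<le> ennreal (2 / r) * (Py (Im c - \<sigma>) + Px (Re c + \<sigma>) + Py (Im c + \<sigma>) + Px (Re c - \<sigma>))"
      by (rule mult_right_mono) (fact, simp)
    finally show ?thesis using True by simp
  qed simp
  then have "(\<integral>\<^sup>+ \<sigma>. ennreal (2 * pi * cmod (H c)) * indicator {r/2..r} \<sigma> \<partial>lborel)
     \<le> (\<integral>\<^sup>+ \<sigma>. ennreal (2 / r) * (Py (Im c - \<sigma>) + Px (Re c + \<sigma>) + Py (Im c + \<sigma>) + Px (Re c - \<sigma>)) \<partial>lborel)"
    by (intro nn_integral_mono)
  also have "\<dots> = ennreal (2 / r) * (Q + Q + Q + Q)"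
    by (simp add: nn_integral_cmult nn_integral_add nn_integral_lborel_translate Q_eq)
  finally show ?thesis
    using r by (simp add: nn_integral_cmult_indicator)
qed

lemma norm_sq_le_square_nn_integral:
  fixes H :: "complex \<Rightarrow> complex"
  assumes "H holomorphic_on csquare c r" and r: "r > 0"
  defines "Q \<equiv> \<integral>\<^sup>+ z. ennreal (cmod (H z)) * indicator (csquare c r) z \<partial>lborel"
  shows "ennreal (cmod (H c) * r^2) \<le> 3 * Q"
proof (cases Q)
  case (real q)
  then have "2 * pi * cmod (H c) * (r / 2) \<le> 2 / r * (4 * q)"
    using averaged_Cauchy_square_estimate[OF assms(1,2)] r
    by (simp add: Q_def ennreal_mult'[symmetric] ennreal_plus[symmetric] del: ennreal_plus)
  then have "pi * (cmod (H c) * r^2) \<le> 8 * q"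
    using r by (simp add: field_simps power2_eq_square)
  moreover have "3 * (cmod (H c) * r^2) \<le> pi * (cmod (H c) * r^2)"
    using pi_gt3 by (intro mult_right_mono) auto
  ultimately have "cmod (H c) * r^2 \<le> 3 * q" using real by linarith
  then have "ennreal (cmod (H c) * r^2) \<le> ennreal (3 * q)" by (rule ennreal_leI)
  then show ?thesis using real by (simp add: ennreal_mult)
qed simp

section \<open>Hyperbolic balls, the geodesic ray and annuli\<close>

lemma tanh_artanh_real:
  fixes x :: real assumes "-1 < x" "x < 1"
  shows "tanh (artanh x) = x"
proof -
  have "(1 + x) / (1 - x) > 0" using assms by simp
  then have e: "exp (- 2 * artanh x) = (1 - x) / (1 + x)"
    by (simp add: artanh_def exp_minus)
  show ?thesis unfolding tanh_real_altdef e using assms by (simp add: field_simps)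
qed

lemma hball0_eq_ball: "hball0 t = ball 0 (tanh (t / 2))"
proof (rule set_eqI)
  fix z :: complex
  show "z \<in> hball0 t \<longleftrightarrow> z \<in> ball 0 (tanh (t / 2))"
  proof (cases "cmod z < 1")
    case True
    then have "cmod z = tanh (artanh (cmod z))"
      by (simp add: tanh_artanh_real order_less_le_trans[of "-1" 0])
    then have "cmod z < tanh (t / 2) \<longleftrightarrow> artanh (cmod z) < t / 2"
      by (metis tanh_real_less_iff)
    then show ?thesis using True by (auto simp: hball0_def hdist_def)
  next
    case False
    then show ?thesis using tanh_real_lt_1[of "t / 2"] by (auto simp: hball0_def)
  qed
qed

lemma hball0_subset_disc: "hball0 t \<subseteq> ball 0 1"
  using tanh_real_lt_1[of "t / 2"] by (auto simp: hball0_eq_ball)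

lemma hball0_mono: "s \<le> t \<Longrightarrow> hball0 s \<subseteq> hball0 t"
  unfolding hball0_eq_ball by (rule subset_ball) simp

lemma norm_hray: "t \<ge> 0 \<Longrightarrow> cmod (hray \<theta> t) = tanh (t / 2)"
  by (simp add: hray_def norm_mult)

lemma norm_hray_less_1: "cmod (hray \<theta> t) < 1"
  using tanh_real_bounds[of "t / 2"] by (simp add: hray_def norm_mult abs_less_iff)

lemma continuous_on_hray: "continuous_on UNIV (hray \<theta>)"
  unfolding hray_def by (intro continuous_intros) auto

lemma norm_bounds_csquare:
  assumes "w \<in> csquare z r"
  shows "cmod w \<le> cmod z + 2 * r" "cmod z - 2 * r \<le> cmod w"
proof -
  have "\<bar>Re (w - z)\<bar> \<le> r" "\<bar>Im (w - z)\<bar> \<le> r"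
    using assms by (auto simp: in_cbox_complex_iff)
  then have "cmod (w - z) \<le> 2 * r" using cmod_le[of "w - z"] by linarith
  then show "cmod w \<le> cmod z + 2 * r" "cmod z - 2 * r \<le> cmod w"
    using norm_triangle_ineq2[of w z] norm_triangle_ineq2[of z w] norm_minus_commute[of w z] by simp_all
qed

text \<open>For \<open>|z| = tanh (t/2)\<close>, the factor \<open>1/8\<close> keeps every point of the square between the
  hyperbolic radii \<open>t - 1\<close> and \<open>t + 1\<close>.\<close>

abbreviation disc_square :: "complex \<Rightarrow> complex set" where
  "disc_square z \<equiv> csquare z ((1 - cmod z) / 8)"

lemma disc_square_subset_disc:
  assumes "cmod z < 1"
  shows "disc_square z \<subseteq> ball 0 1"
proof
  fix w assume "w \<in> disc_square z"
  from norm_bounds_csquare(1)[OF this] assms show "w \<in> ball 0 1" by (simp add: field_simps)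
qed

lemma norm_sq_weighted_le_disc_square_nn_integral:
  fixes G :: "complex \<Rightarrow> complex"
  assumes holo: "G holomorphic_on ball 0 1" and z: "cmod z < 1"
  shows "ennreal ((cmod (G z))^2 * (1 - (cmod z)^2)^2)
     \<le> 768 * (\<integral>\<^sup>+ w. ennreal ((cmod (G w))^2) * indicator (disc_square z) w \<partial>lborel)"
proof -
  define r where "r = (1 - cmod z) / 8"
  have r: "r > 0" using z by (simp add: r_def)
  have "(\<lambda>w. (G w)^2) holomorphic_on csquare z r"
    using holomorphic_on_subset[OF holo disc_square_subset_disc[OF z]] unfolding r_def
    by (intro holomorphic_intros)
  from norm_sq_le_square_nn_integral[OF this r]
  have sub_mean: "ennreal (cmod ((G z)^2) * r^2)
                    \<le> 3 * (\<integral>\<^sup>+ w. ennreal (cmod ((G w)^2)) * indicator (csquare z r) w \<partial>lborel)" .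
  define K where "K = (8 * (1 + cmod z))^2"
  have K: "0 \<le> K" "K \<le> 256"
    using z power_mono[of "8 * (1 + cmod z)" 16 2] by (auto simp: K_def)
  have "(cmod (G z))^2 * (1 - (cmod z)^2)^2 = (cmod ((G z)^2) * r^2) * K"
    using z by (simp add: K_def r_def norm_power norm_mult field_simps power2_eq_square)
  then have "ennreal ((cmod (G z))^2 * (1 - (cmod z)^2)^2) = ennreal (cmod ((G z)^2) * r^2) * ennreal K"
    using K by (simp add: ennreal_mult)
  also have "\<dots> \<le> (3 * (\<integral>\<^sup>+ w. ennreal (cmod ((G w)^2)) * indicator (csquare z r) w \<partial>lborel)) * ennreal 256"
    by (intro mult_mono sub_mean ennreal_leI K) auto
  finally show ?thesis by (simp add: r_def norm_power mult_ac)
qed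

lemma tanh_half_eq: "tanh (x / 2) = 1 - 2 / (exp x + 1 :: real)"
proof -
  define E where "E = exp x"
  have E: "E > 0" by (simp add: E_def)
  have "exp (- 2 * (x / 2)) = 1 / E" by (simp add: E_def exp_minus inverse_eq_divide)
  then have "tanh (x / 2) = (1 - 1 / E) / (1 + 1 / E)" by (simp add: tanh_real_altdef)
  also have "\<dots> = 1 - 2 / (E + 1)" using E by (simp add: divide_simps)
  finally show ?thesis by (simp add: E_def)
qed

lemma tanh_half_succ_gt:
  fixes t :: real assumes "t \<ge> 0"
  shows "tanh (t / 2) + (1 - tanh (t / 2)) / 4 < tanh ((t + 1) / 2)"
proof -
  define E where "E = exp t"
  define q where "q = exp (1::real)"
  have E: "E \<ge> 1" using assms exp_ge_add_one_self[of t] by (simp add: E_def)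
  have q: "q \<ge> 2" using exp_ge_add_one_self[of 1] by (simp add: q_def)
  have "12 * E \<le> 6 * (E * q)" using q E by simp
  then have "8 * (E + 1) < 6 * (E * q + 1)" unfolding distrib_left using E by linarith
  moreover have "0 < E + 1" "0 < E * q + 1" using E q by (simp_all add: add_pos_pos)
  ultimately have "2 / (E * q + 1) < 3 / 4 * (2 / (E + 1))"
    by (simp add: field_simps)
  moreover have "b < 3 / 4 * a \<Longrightarrow> 1 - a + (1 - (1 - a)) / 4 < 1 - b" for a b :: real
    by (simp add: field_simps)
  ultimately show ?thesis
    unfolding tanh_half_eq exp_add E_def[symmetric] q_def[symmetric] by blast
qed

lemma tanh_half_pred_le:
  fixes t :: real assumes "t \<ge> 0"
  shows "tanh ((t - 1) / 2) \<le> tanh (t / 2) - (1 - tanh (t / 2)) / 4"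
proof -
  define E where "E = exp t"
  define q where "q = exp (1::real)"
  have E: "E \<ge> 1" using assms exp_ge_add_one_self[of t] by (simp add: E_def)
  have q: "q \<ge> 2" using exp_ge_add_one_self[of 1] by (simp add: q_def)
  define p where "p = E / q"
  have "p \<le> E / 2" unfolding p_def using q E by (intro divide_left_mono) auto
  moreover have "0 < E + 1" "0 < p + 1" using E q by (simp_all add: p_def add_pos_pos)
  ultimately have "5 / 4 * (2 / (E + 1)) \<le> 2 / (p + 1)"
    using E by (simp add: field_simps)
  moreover have "5 / 4 * a \<le> b \<Longrightarrow> 1 - b \<le> 1 - a - (1 - (1 - a)) / 4" for a b :: real
    by (simp add: field_simps)
  ultimately show ?thesis
    unfolding tanh_half_eq exp_diff E_def[symmetric] q_def[symmetric] p_def[symmetric] by blast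
qed

definition hannulus :: "nat \<Rightarrow> complex set" where
  "hannulus k = {w. tanh ((real k - 1) / 2) \<le> cmod w \<and> cmod w < tanh ((real k + 2) / 2)}"

lemma hannulus_subset_hball0: "hannulus k \<subseteq> hball0 (real k + 2)"
  by (auto simp: hball0_eq_ball hannulus_def)

lemma disc_square_hray_subset_hannulus:
  assumes t: "real k \<le> t" "t \<le> real k + 1"
  shows "disc_square (hray \<theta> t) \<subseteq> hannulus k"
proof
  fix w assume w: "w \<in> disc_square (hray \<theta> t)"
  have t0: "t \<ge> 0" using t by simp
  define s where "s = tanh (t / 2)"
  have "cmod w \<le> s + (1 - s) / 4" "s - (1 - s) / 4 \<le> cmod w"
    using norm_bounds_csquare[OF w] norm_hray[OF t0] by (simp_all add: s_def field_simps)
  then have "cmod w < tanh ((t + 1) / 2)" "tanh ((t - 1) / 2) \<le> cmod w"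
    using tanh_half_succ_gt[OF t0] tanh_half_pred_le[OF t0] by (simp_all add: s_def)
  moreover have "tanh ((t + 1) / 2) \<le> tanh ((real k + 2) / 2)"
    and "tanh ((real k - 1) / 2) \<le> tanh ((t - 1) / 2)" using t by simp_all
  ultimately show "w \<in> hannulus k" unfolding hannulus_def mem_Collect_eq by linarith
qed

lemma sum_indicator_hannulus_le:
  "(\<Sum>k<n. indicator (hannulus k) w) \<le> (3::real) * indicator (hball0 (real n + 1)) w"
proof -
  define K where "K = {..<n} \<inter> {k. w \<in> hannulus k}"
  have sum: "(\<Sum>k<n. indicator (hannulus k) w) = real (card K)"
    by (simp add: K_def indicator_def sum.If_cases)
  show ?thesis
  proof (cases "K = {}")
    case False
    define m where "m = Min K"
    have fin: "finite K" by (simp add: K_def)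
    have m: "m \<in> K" using Min_in[OF fin False] by (simp add: m_def)
    have "K \<subseteq> {m..m+2}"
    proof
      fix k assume k: "k \<in> K"
      have "tanh ((real k - 1) / 2) \<le> cmod w" "cmod w < tanh ((real m + 2) / 2)"
        using k m by (simp_all add: K_def hannulus_def)
      then have "tanh ((real k - 1) / 2) < tanh ((real m + 2) / 2)" by linarith
      then have "k \<le> m + 2" by simp
      moreover have "m \<le> k" using Min_le[OF fin k] by (simp add: m_def)
      ultimately show "k \<in> {m..m+2}" by simp
    qed
    then have "card K \<le> 3" using card_mono[of "{m..m+2}" K] by simp
    moreover have "w \<in> hball0 (real n + 1)"
      using m hannulus_subset_hball0[of m] hball0_mono[of "real m + 2" "real n + 1"]
      by (auto simp: K_def)
    ultimately show ?thesis by (simp add: sum)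
  qed (simp add: sum)
qed

section \<open>Length of the ray under an area-controlled density\<close>

text \<open>\<open>\<Psi>\<close> is the area density (\<open>|f'|\<^sup>2\<close> or \<open>|f'|\<^sup>2 \<lambda>\<^sub>H(f)\<^sup>2\<close>) and \<open>\<nu>\<close> the integrand
  along the ray.\<close>

locale ray_length_estimate =
  fixes \<Psi> \<nu> :: "complex \<Rightarrow> real" and \<alpha> C :: real
  assumes alpha_gt_1: "\<alpha> > 1" and C_nonneg: "C \<ge> 0"
    and Psi_nonneg: "\<And>z. 0 \<le> \<Psi> z"
    and continuous_Psi: "continuous_on (ball 0 1) \<Psi>"
    and continuous_nu: "continuous_on (ball 0 1) \<nu>"
    and nu_nonneg: "\<And>z. cmod z < 1 \<Longrightarrow> 0 \<le> \<nu> z"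
    and nu_sq_le: "\<And>z. cmod z < 1 \<Longrightarrow> ennreal ((\<nu> z)^2)
         \<le> ennreal C * (\<integral>\<^sup>+ w. ennreal (\<Psi> w) * indicator (disc_square z) w \<partial>lborel)"
    and weighted_area_finite: "(\<integral>\<^sup>+ t. (\<integral>\<^sup>+ z. ennreal (\<Psi> z) * indicator (hball0 t) z \<partial>lborel)
                 * ennreal (t powr (-\<alpha>)) * indicator {1..} t \<partial>lborel) < \<infinity>"
begin

definition A :: "real \<Rightarrow> ennreal" where
  "A t = (\<integral>\<^sup>+ z. ennreal (\<Psi> z) * indicator (hball0 t) z \<partial>lborel)"

definition tail :: "real \<Rightarrow> ennreal" where
  "tail \<tau> = (\<integral>\<^sup>+ t. A t * ennreal (t powr (-\<alpha>)) * indicator {1..} t * indicator {\<tau>..} t \<partial>lborel)"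

lemma Psi_indicator_measurable:
  assumes "S \<subseteq> ball 0 1" and "S \<in> sets borel"
  shows "(\<lambda>z. ennreal (\<Psi> z) * indicator S z) \<in> borel_measurable borel"
  using borel_measurable_norm_indicator[OF continuous_on_subset[OF continuous_Psi assms(1)] assms(2)]
  by (simp add: abs_of_nonneg Psi_nonneg)

lemma A_mono: "s \<le> t \<Longrightarrow> A s \<le> A t"
  unfolding A_def using hball0_mono[of s t]
  by (intro nn_integral_mono mult_left_mono) (auto simp: indicator_def)

lemma tail_antimono: "\<tau>1 \<le> \<tau>2 \<Longrightarrow> tail \<tau>2 \<le> tail \<tau>1"
  unfolding tail_def by (intro nn_integral_mono mult_left_mono) (auto simp: indicator_def)

lemma tail_finite: "tail \<tau> < \<infinity>"
proof -
  have "tail \<tau> \<le> (\<integral>\<^sup>+ t. A t * ennreal (t powr (-\<alpha>)) * indicator {1..} t \<partial>lborel)"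
    unfolding tail_def by (intro nn_integral_mono) (auto simp: indicator_def)
  then show ?thesis using weighted_area_finite by (simp add: A_def[abs_def])
qed

lemma A_le_tail:
  assumes \<tau>: "\<tau> \<ge> 1"
  shows "A \<tau> * ennreal (\<tau> * (2 * \<tau>) powr (-\<alpha>)) \<le> tail \<tau>"
proof -
  have "(\<integral>\<^sup>+ t. (A \<tau> * ennreal ((2 * \<tau>) powr (-\<alpha>))) * indicator {\<tau>..2*\<tau>} t \<partial>lborel)
          = A \<tau> * ennreal ((2 * \<tau>) powr (-\<alpha>)) * ennreal \<tau>"
    using \<tau> by (simp add: nn_integral_cmult_indicator)
  then have "A \<tau> * ennreal (\<tau> * (2 * \<tau>) powr (-\<alpha>))
          = (\<integral>\<^sup>+ t. (A \<tau> * ennreal ((2 * \<tau>) powr (-\<alpha>))) * indicator {\<tau>..2*\<tau>} t \<partial>lborel)"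
    using \<tau> by (simp add: ennreal_mult mult_ac)
  also have "\<dots> \<le> tail \<tau>"
    unfolding tail_def
  proof (intro nn_integral_mono)
    fix t :: real
    show "A \<tau> * ennreal ((2 * \<tau>) powr - \<alpha>) * indicator {\<tau>..2 * \<tau>} t
            \<le> A t * ennreal (t powr - \<alpha>) * indicator {1..} t * indicator {\<tau>..} t"
    proof (cases "t \<in> {\<tau>..2*\<tau>}")
      case True
      then have "(2 * \<tau>) powr (-\<alpha>) \<le> t powr (-\<alpha>)"
        using \<tau> alpha_gt_1 by (intro powr_mono2') auto
      then have "A \<tau> * ennreal ((2 * \<tau>) powr - \<alpha>) \<le> A t * ennreal (t powr (-\<alpha>))"
        using True by (intro mult_mono A_mono ennreal_leI) auto
      then show ?thesis using True \<tau> by simp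
    qed simp
  qed
  finally show ?thesis .
qed

lemma A_finite: "A \<tau> < \<infinity>"
proof -
  define \<sigma> where "\<sigma> = max 1 \<tau>"
  have "\<sigma> \<ge> 1" by (simp add: \<sigma>_def)
  then have "A \<sigma> * ennreal (\<sigma> * (2 * \<sigma>) powr (-\<alpha>)) < \<infinity>"
    by (rule le_less_trans[OF A_le_tail tail_finite])
  moreover have "\<sigma> * (2 * \<sigma>) powr (-\<alpha>) > 0" using \<open>\<sigma> \<ge> 1\<close> by simp
  ultimately have "A \<sigma> < \<infinity>" by (auto simp: ennreal_mult_less_top)
  moreover have "A \<tau> \<le> A \<sigma>" by (rule A_mono) (simp add: \<sigma>_def)
  ultimately show ?thesis by (rule le_less_trans[rotated])
qed

definition A_real :: "real \<Rightarrow> real" where "A_real t = enn2real (A t)"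
definition tail_real :: "real \<Rightarrow> real" where "tail_real t = enn2real (tail t)"

lemma A_eq_A_real: "A t = ennreal (A_real t)"
  using A_finite[of t] by (simp add: A_real_def ennreal_enn2real_if)

lemma tail_eq_tail_real: "tail t = ennreal (tail_real t)"
  using tail_finite[of t] by (simp add: tail_real_def ennreal_enn2real_if)

lemma A_real_nonneg: "A_real t \<ge> 0" by (simp add: A_real_def)
lemma tail_real_nonneg: "tail_real t \<ge> 0" by (simp add: tail_real_def)

lemma A_real_mono: "s \<le> t \<Longrightarrow> A_real s \<le> A_real t"
  using A_mono[of s t] by (simp add: A_eq_A_real A_real_nonneg)

lemma tail_real_antimono: "\<tau>1 \<le> \<tau>2 \<Longrightarrow> tail_real \<tau>2 \<le> tail_real \<tau>1"
  using tail_antimono[of \<tau>1 \<tau>2] by (simp add: tail_eq_tail_real tail_real_nonneg)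

lemma A_measurable [measurable]: "A \<in> borel_measurable borel"
proof -
  have "A_real \<in> borel_measurable borel"
    by (rule borel_measurable_mono) (simp add: mono_def A_real_mono)
  then show ?thesis unfolding A_eq_A_real[abs_def] by measurable
qed

lemma tail_real_tendsto_0: "(tail_real \<longlongrightarrow> 0) at_top"
proof -
  define g where "g n t = A t * ennreal (t powr (-\<alpha>)) * indicator {1..} t * indicator {real n..} t"
    for n :: nat and t
  have "(\<integral>\<^sup>+ t. (INF n. g n t) \<partial>lborel) = (INF n. integral\<^sup>N lborel (g n))"
  proof (rule nn_integral_monotone_convergence_INF_decseq)
    show "decseq g"
      by (intro antimonoI le_funI) (auto simp: g_def indicator_def)
    show "(\<integral>\<^sup>+ x. g 0 x \<partial>lborel) < \<infinity>"
      using tail_finite[of 0] by (simp add: g_def tail_def)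
  qed (simp add: g_def)
  moreover have "(INF n. g n t) = 0" for t
  proof -
    obtain n :: nat where "t < real n" using reals_Archimedean2 by blast
    then have "g n t = 0" by (simp add: g_def)
    then show ?thesis by (metis INF_lower UNIV_I bot.extremum_uniqueI bot_ennreal)
  qed
  ultimately have "(INF n. tail (real n)) = 0" by (simp add: g_def[abs_def] tail_def)
  show ?thesis
  proof (rule tendsto_iff[THEN iffD2, rule_format])
    fix \<epsilon> :: real assume "\<epsilon> > 0"
    then have "(INF n. tail (real n)) < ennreal \<epsilon>"
      using \<open>(INF n. tail (real n)) = 0\<close> by simp
    then obtain n where "tail (real n) < ennreal \<epsilon>" by (auto simp: INF_less_iff)
    then have "tail_real (real n) < \<epsilon>"
      by (simp add: tail_eq_tail_real ennreal_less_iff tail_real_nonneg)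
    then have "dist (tail_real \<tau>) 0 < \<epsilon>" if "real n \<le> \<tau>" for \<tau>
      using tail_real_antimono[OF that] tail_real_nonneg[of \<tau>] by simp
    then show "\<forall>\<^sub>F \<tau> in at_top. dist (tail_real \<tau>) 0 < \<epsilon>"
      by (rule eventually_at_top_linorderI)
  qed
qed

lemma A_real_le_tail_real:
  assumes \<tau>: "\<tau> \<ge> 1"
  shows "A_real \<tau> \<le> 2 powr \<alpha> * \<tau> powr (\<alpha> - 1) * tail_real \<tau>"
proof -
  have "ennreal (A_real \<tau> * (\<tau> * (2 * \<tau>) powr (-\<alpha>))) \<le> ennreal (tail_real \<tau>)"
    using A_le_tail[OF \<tau>] \<tau> by (simp add: A_eq_A_real tail_eq_tail_real ennreal_mult A_real_nonneg)
  then have le: "A_real \<tau> * (\<tau> * (2 * \<tau>) powr (-\<alpha>)) \<le> tail_real \<tau>"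
    using tail_real_nonneg by (simp add: ennreal_le_iff)
  have "\<tau> * (2 * \<tau>) powr (-\<alpha>) * (2 powr \<alpha> * \<tau> powr (\<alpha> - 1))
          = (2 powr (-\<alpha>) * 2 powr \<alpha>) * (\<tau> * (\<tau> powr (-\<alpha>) * \<tau> powr (\<alpha> - 1)))"
    using \<tau> by (simp add: powr_mult mult_ac)
  also have "\<dots> = 1"
  proof -
    have "2 powr (-\<alpha>) * 2 powr \<alpha> = (1::real)" "\<tau> powr (-\<alpha>) * \<tau> powr (\<alpha> - 1) = \<tau> powr (-1)"
      by (simp_all add: powr_add[symmetric])
    moreover have "\<tau> * \<tau> powr (-1) = 1" using \<tau> by (simp add: powr_minus)
    ultimately show ?thesis by simp
  qed
  finally have inv: "\<tau> * (2 * \<tau>) powr (-\<alpha>) * (2 powr \<alpha> * \<tau> powr (\<alpha> - 1)) = 1" .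
  have "A_real \<tau> = A_real \<tau> * (\<tau> * (2 * \<tau>) powr (-\<alpha>)) * (2 powr \<alpha> * \<tau> powr (\<alpha> - 1))"
    using inv by (simp add: mult.assoc)
  also have "\<dots> \<le> tail_real \<tau> * (2 powr \<alpha> * \<tau> powr (\<alpha> - 1))"
    by (rule mult_right_mono[OF le]) simp
  finally show ?thesis by (simp add: mult_ac)
qed

definition hannulus_area :: "nat \<Rightarrow> real" where
  "hannulus_area k = enn2real (\<integral>\<^sup>+ w. ennreal (\<Psi> w) * indicator (hannulus k) w \<partial>lborel)"

lemma hannulus_measurable [measurable]: "hannulus k \<in> sets borel"
proof -
  have [measurable]: "(tanh :: real \<Rightarrow> real) \<in> borel_measurable borel"
    by (intro borel_measurable_continuous_onI continuous_intros) auto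
  show ?thesis unfolding hannulus_def by measurable
qed

lemma hannulus_subset_disc: "hannulus k \<subseteq> ball 0 1"
  using hannulus_subset_hball0 hball0_subset_disc by blast

lemma hannulus_area_eq:
  "(\<integral>\<^sup>+ w. ennreal (\<Psi> w) * indicator (hannulus k) w \<partial>lborel) = ennreal (hannulus_area k)"
proof -
  have "(\<integral>\<^sup>+ w. ennreal (\<Psi> w) * indicator (hannulus k) w \<partial>lborel) \<le> A (real k + 2)"
    unfolding A_def using hannulus_subset_hball0[of k]
    by (intro nn_integral_mono mult_left_mono) (auto simp: indicator_def)
  then have "(\<integral>\<^sup>+ w. ennreal (\<Psi> w) * indicator (hannulus k) w \<partial>lborel) < \<infinity>"
    using A_finite by (rule le_less_trans)
  then show ?thesis by (simp add: hannulus_area_def ennreal_enn2real_if)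
qed

lemma hannulus_area_nonneg: "hannulus_area k \<ge> 0"
  by (simp add: hannulus_area_def)

lemma nu_hray_sq_le:
  assumes "real k \<le> t" "t \<le> real k + 1"
  shows "(\<nu> (hray \<theta> t))^2 \<le> C * hannulus_area k"
proof -
  have "ennreal ((\<nu> (hray \<theta> t))^2)
          \<le> ennreal C * (\<integral>\<^sup>+ w. ennreal (\<Psi> w) * indicator (disc_square (hray \<theta> t)) w \<partial>lborel)"
    by (rule nu_sq_le[OF norm_hray_less_1])
  also have "\<dots> \<le> ennreal C * (\<integral>\<^sup>+ w. ennreal (\<Psi> w) * indicator (hannulus k) w \<partial>lborel)"
    using disc_square_hray_subset_hannulus[OF assms, of \<theta>]
    by (intro mult_left_mono nn_integral_mono) (auto simp: indicator_def)
  also have "\<dots> = ennreal (C * hannulus_area k)"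
    using C_nonneg hannulus_area_nonneg by (simp add: hannulus_area_eq ennreal_mult)
  finally show ?thesis using C_nonneg hannulus_area_nonneg by (simp add: ennreal_le_iff)
qed

lemma sum_hannulus_area_le: "(\<Sum>k<n. hannulus_area k) \<le> 3 * A_real (real n + 1)"
proof -
  have "ennreal (\<Sum>k<n. hannulus_area k)
          = (\<Sum>k<n. \<integral>\<^sup>+ w. ennreal (\<Psi> w) * indicator (hannulus k) w \<partial>lborel)"
    using hannulus_area_nonneg by (simp add: hannulus_area_eq)
  also have "\<dots> = (\<integral>\<^sup>+ w. (\<Sum>k<n. ennreal (\<Psi> w) * indicator (hannulus k) w) \<partial>lborel)"
    by (rule nn_integral_sum[symmetric]) (simp add: Psi_indicator_measurable hannulus_subset_disc)
  also have "\<dots> \<le> (\<integral>\<^sup>+ w. 3 * (ennreal (\<Psi> w) * indicator (hball0 (real n + 1)) w) \<partial>lborel)"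
  proof (intro nn_integral_mono)
    fix w
    have "(\<Sum>k<n. ennreal (\<Psi> w) * indicator (hannulus k) w)
            = (\<Sum>k<n. ennreal (\<Psi> w * indicator (hannulus k) w))"
      by (intro sum.cong) (auto simp: indicator_def)
    also have "\<dots> = ennreal (\<Psi> w * (\<Sum>k<n. indicator (hannulus k) w))"
      using Psi_nonneg[of w] by (simp add: sum_distrib_left)
    also have "\<dots> \<le> ennreal (\<Psi> w * (3 * indicator (hball0 (real n + 1)) w))"
      by (intro ennreal_leI mult_left_mono sum_indicator_hannulus_le Psi_nonneg)
    also have "\<dots> = 3 * (ennreal (\<Psi> w) * indicator (hball0 (real n + 1)) w)"
      using Psi_nonneg[of w] by (simp add: indicator_def ennreal_mult mult.commute)
    finally show "(\<Sum>k<n. ennreal (\<Psi> w) * indicator (hannulus k) w)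
                    \<le> 3 * (ennreal (\<Psi> w) * indicator (hball0 (real n + 1)) w)" .
  qed
  also have "\<dots> = 3 * A (real n + 1)"
    unfolding A_def using Psi_indicator_measurable[OF hball0_subset_disc]
    by (simp add: hball0_eq_ball nn_integral_cmult)
  also have "\<dots> = ennreal (3 * A_real (real n + 1))"
    by (simp add: A_eq_A_real ennreal_mult A_real_nonneg)
  finally show ?thesis using A_real_nonneg by (simp add: ennreal_le_iff)
qed

lemma continuous_on_nu_hray: "continuous_on UNIV (\<lambda>t. \<nu> (hray \<theta> t))"
  by (rule continuous_on_compose2[OF continuous_nu continuous_on_hray]) (use norm_hray_less_1 in auto)

lemma nu_hray_integrable: "(\<lambda>t. \<nu> (hray \<theta> t)) integrable_on {a..b}"
  by (rule integrable_continuous_interval, rule continuous_on_subset[OF continuous_on_nu_hray]) auto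

lemma ray_integral_nonneg: "0 \<le> integral {0..\<rho>} (\<lambda>t. \<nu> (hray \<theta> t))"
  by (rule integral_nonneg[OF nu_hray_integrable]) (simp add: nu_nonneg[OF norm_hray_less_1])

lemma ray_integral_nat_le: "integral {0..real n} (\<lambda>t. \<nu> (hray \<theta> t)) \<le> (\<Sum>k<n. sqrt (C * hannulus_area k))"
proof (induction n)
  case (Suc n)
  have "integral {real n..real n + 1} (\<lambda>t. \<nu> (hray \<theta> t)) \<le> integral {real n..real n + 1} (\<lambda>t. sqrt (C * hannulus_area n))"
  proof (rule integral_le[OF nu_hray_integrable integrable_const_ivl])
    fix t assume "t \<in> {real n..real n + 1}"
    then have "(\<nu> (hray \<theta> t))^2 \<le> C * hannulus_area n" by (intro nu_hray_sq_le) auto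
    then show "\<nu> (hray \<theta> t) \<le> sqrt (C * hannulus_area n)"
      using nu_nonneg[OF norm_hray_less_1] by (intro real_le_rsqrt) auto
  qed
  moreover have "integral {0..real (Suc n)} (\<lambda>t. \<nu> (hray \<theta> t))
      = integral {0..real n} (\<lambda>t. \<nu> (hray \<theta> t)) + integral {real n..real n + 1} (\<lambda>t. \<nu> (hray \<theta> t))"
    using Henstock_Kurzweil_Integration.integral_combine[where a = 0 and c = "real n" and b = "real n + 1"
            and f = "\<lambda>t. \<nu> (hray \<theta> t)"] nu_hray_integrable
    by (simp add: add.commute)
  ultimately show ?case using Suc.IH by simp
qed simp

lemma ray_integral_nat_sq_le:
  "(integral {0..real n} (\<lambda>t. \<nu> (hray \<theta> t)))^2 \<le> 3 * C * real n * A_real (real n + 1)"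
proof -
  have "(integral {0..real n} (\<lambda>t. \<nu> (hray \<theta> t)))^2 \<le> (\<Sum>k<n. sqrt (C * hannulus_area k))^2"
    using ray_integral_nonneg ray_integral_nat_le by (intro power_mono) auto
  also have "\<dots> \<le> (\<Sum>k<n. (sqrt (C * hannulus_area k))^2) * card {..<n}"
    by (rule sum_squared_le_sum_of_squares)
  also have "\<dots> = C * real n * (\<Sum>k<n. hannulus_area k)"
    using C_nonneg hannulus_area_nonneg by (simp add: sum_distrib_left mult_ac)
  also have "\<dots> \<le> C * real n * (3 * A_real (real n + 1))"
    using sum_hannulus_area_le C_nonneg by (intro mult_left_mono) auto
  finally show ?thesis by (simp add: mult_ac)
qed

lemma ray_integral_sq_le_tail:
  assumes \<rho>: "\<rho> \<ge> 2"
  shows "(integral {0..\<rho>} (\<lambda>t. \<nu> (hray \<theta> t)))^2 \<le> 3 * C * 4 powr \<alpha> * \<rho> powr \<alpha> * tail_real \<rho>"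
proof -
  define n where "n = nat \<lceil>\<rho>\<rceil>"
  have n: "\<rho> \<le> real n" "real n \<le> \<rho> + 1" using \<rho> by (simp_all add: n_def)
  have "integral {0..\<rho>} (\<lambda>t. \<nu> (hray \<theta> t)) \<le> integral {0..real n} (\<lambda>t. \<nu> (hray \<theta> t))"
    using n by (intro integral_subset_le nu_hray_integrable) (auto simp: nu_nonneg[OF norm_hray_less_1])
  then have "(integral {0..\<rho>} (\<lambda>t. \<nu> (hray \<theta> t)))^2 \<le> (integral {0..real n} (\<lambda>t. \<nu> (hray \<theta> t)))^2"
    using ray_integral_nonneg by (intro power_mono) auto
  also have "\<dots> \<le> 3 * C * real n * A_real (real n + 1)"
    by (rule ray_integral_nat_sq_le)
  also have "\<dots> \<le> 3 * C * (2 * \<rho>) * (2 powr \<alpha> * (2 * \<rho>) powr (\<alpha> - 1) * tail_real \<rho>)"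
  proof (intro mult_mono)
    have "A_real (real n + 1) \<le> 2 powr \<alpha> * (real n + 1) powr (\<alpha> - 1) * tail_real (real n + 1)"
      by (rule A_real_le_tail_real) simp
    also have "\<dots> \<le> 2 powr \<alpha> * (2 * \<rho>) powr (\<alpha> - 1) * tail_real \<rho>"
      using n \<rho> alpha_gt_1 tail_real_nonneg
      by (intro mult_mono powr_mono2 tail_real_antimono) auto
    finally show "A_real (real n + 1) \<le> 2 powr \<alpha> * (2 * \<rho>) powr (\<alpha> - 1) * tail_real \<rho>" .
  qed (use n \<rho> C_nonneg A_real_nonneg in auto)
  also have "\<dots> = 3 * C * (2 powr \<alpha> * ((2 * \<rho>) * (2 * \<rho>) powr (\<alpha> - 1))) * tail_real \<rho>"
    by (simp only: mult_ac)
  also have "\<dots> = 3 * C * (2 powr \<alpha> * (2 * \<rho>) powr \<alpha>) * tail_real \<rho>"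
    using \<rho> by (simp add: powr_mult_base)
  also have "\<dots> = 3 * C * 4 powr \<alpha> * \<rho> powr \<alpha> * tail_real \<rho>"
    using \<rho> by (simp add: powr_mult[symmetric] mult_ac)
  finally show ?thesis .
qed

theorem ray_integral_little_o:
  "(\<lambda>\<rho>. integral {0..\<rho>} (\<lambda>t. \<nu> (hray \<theta> t))) \<in> o[at_top](\<lambda>\<rho>. \<rho> powr (\<alpha> / 2))"
proof (rule landau_o.smallI)
  fix \<epsilon> :: real assume \<epsilon>: "\<epsilon> > 0"
  define K where "K = 3 * C * 4 powr \<alpha> + 1"
  have K: "K > 0" "3 * C * 4 powr \<alpha> \<le> K" using C_nonneg by (simp_all add: K_def add_nonneg_pos)
  have "\<forall>\<^sub>F \<rho> in at_top. tail_real \<rho> < \<epsilon>^2 / K"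
    by (rule order_tendstoD(2)[OF tail_real_tendsto_0]) (use \<epsilon> K in simp)
  moreover have "\<forall>\<^sub>F \<rho> in at_top. \<rho> \<ge> (2::real)" by (rule eventually_ge_at_top)
  ultimately show "\<forall>\<^sub>F \<rho> in at_top. norm (integral {0..\<rho>} (\<lambda>t. \<nu> (hray \<theta> t))) \<le> \<epsilon> * norm (\<rho> powr (\<alpha> / 2))"
  proof eventually_elim
    case (elim \<rho>)
    have "(integral {0..\<rho>} (\<lambda>t. \<nu> (hray \<theta> t)))^2 \<le> 3 * C * 4 powr \<alpha> * \<rho> powr \<alpha> * tail_real \<rho>"
      using elim(2) by (rule ray_integral_sq_le_tail)
    also have "\<dots> \<le> K * \<rho> powr \<alpha> * (\<epsilon>^2 / K)"
      using K elim(1) tail_real_nonneg[of \<rho>] by (intro mult_mono mult_right_mono) auto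
    also have "\<dots> = \<epsilon>^2 * \<rho> powr \<alpha>"
      using K by simp
    also have "\<dots> = (\<epsilon> * \<rho> powr (\<alpha> / 2))^2"
    proof -
      have "\<rho> powr \<alpha> = \<rho> powr (\<alpha> / 2) * \<rho> powr (\<alpha> / 2)"
        by (simp add: powr_add[symmetric])
      then show ?thesis by (simp add: power2_eq_square mult_ac)
    qed
    finally have "integral {0..\<rho>} (\<lambda>t. \<nu> (hray \<theta> t)) \<le> \<epsilon> * \<rho> powr (\<alpha> / 2)"
      by (rule power2_le_imp_le) (use \<epsilon> in simp)
    then show ?case using ray_integral_nonneg by simp
  qed
qed

end

section \<open>The Euclidean and the hyperbolic case\<close>

lemma norm_sq_less_1: "cmod z < 1 \<Longrightarrow> (cmod z)^2 < 1"
  by (simp add: abs_square_less_1)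

lemma lambdaH_pos: "cmod z < 1 \<Longrightarrow> lambdaH z > 0"
  by (simp add: lambdaH_def norm_sq_less_1)

lemma continuous_on_lambdaH: "continuous_on (ball 0 1) lambdaH"
  unfolding lambdaH_def[abs_def]
  by (intro continuous_intros) (use norm_sq_less_1 in fastforce)

lemma normHE_sq_le:
  assumes "f holomorphic_on ball 0 1" and z: "cmod z < 1"
  shows "ennreal ((normHE f z)^2)
           \<le> 768 * (\<integral>\<^sup>+ w. ennreal ((cmod (deriv f w))^2) * indicator (disc_square z) w \<partial>lborel)"
proof -
  have "(normHE f z)^2 = (cmod (deriv f z))^2 * (1 - (cmod z)^2)^2 / 4"
    by (simp add: normHE_def lambdaH_def power_divide power_mult_distrib)
  then have "ennreal ((normHE f z)^2) \<le> ennreal ((cmod (deriv f z))^2 * (1 - (cmod z)^2)^2)"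
    using zero_le_power2[of "normHE f z"] by (intro ennreal_leI) linarith
  also have "\<dots> \<le> 768 * (\<integral>\<^sup>+ w. ennreal ((cmod (deriv f w))^2) * indicator (disc_square z) w \<partial>lborel)"
    by (rule norm_sq_weighted_le_disc_square_nn_integral[OF holomorphic_deriv[OF assms(1)] z]) simp
  finally show ?thesis .
qed

lemma ray_integral_normHE_little_o:
  fixes f :: "complex \<Rightarrow> complex"
  assumes "\<alpha> > 1" and "f analytic_on ball 0 1"
    and "(\<integral>\<^sup>+ t. areaE f (hball0 t) * ennreal (t powr (-\<alpha>)) * indicator {1..} t \<partial>lborel) < \<infinity>"
  shows "(\<lambda>\<rho>. integral {0..\<rho>} (\<lambda>t. normHE f (hray \<theta> t))) \<in> o[at_top](\<lambda>\<rho>. \<rho> powr (\<alpha> / 2))"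
proof -
  have f: "f holomorphic_on ball 0 1" using assms(2) analytic_imp_holomorphic by blast
  have cont_deriv: "continuous_on (ball 0 1) (deriv f)"
    by (rule holomorphic_on_imp_continuous_on[OF holomorphic_deriv[OF f]]) simp
  interpret ray_length_estimate "\<lambda>z. (cmod (deriv f z))^2" "normHE f" \<alpha> 768
  proof unfold_locales
    show "continuous_on (ball 0 1) (normHE f)"
      unfolding normHE_def[abs_def] using lambdaH_pos
      by (intro continuous_intros continuous_on_lambdaH cont_deriv) (auto simp: less_imp_neq[symmetric])
    show "0 \<le> normHE f z" if "cmod z < 1" for z
      using lambdaH_pos[OF that] by (simp add: normHE_def)
  qed (use assms(1,3) normHE_sq_le[OF f] in \<open>auto simp: areaE_def intro!: continuous_intros cont_deriv\<close>)
  show ?thesis by (rule ray_integral_little_o)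
qed

lemma norm_one_minus_cnj_mult_sq_ge:
  "(1 - (cmod w)^2) * (1 - (cmod u)^2) \<le> (cmod (1 - cnj w * u))^2"
proof -
  have "(cmod (1 - cnj w * u))^2 - (1 - (cmod w)^2) * (1 - (cmod u)^2)
          = (Re w - Re u)^2 + (Im w - Im u)^2"
    unfolding cmod_power2 by (simp add: power2_eq_square algebra_simps)
  then show ?thesis by (smt (verit) zero_le_power2)
qed

lemma one_minus_cnj_mult_nonzero:
  assumes "cmod w < 1" "cmod u < 1"
  shows "1 - cnj w * u \<noteq> 0"
proof
  assume "1 - cnj w * u = 0"
  then have "cmod w * cmod u = 1" by (metis complex_mod_cnj norm_mult norm_one right_minus_eq)
  moreover have "cmod w * cmod u < 1"
    using assms mult_strict_mono[of "cmod w" 1 "cmod u" 1] by simp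
  ultimately show False by simp
qed

lemma norm_Moebius_chain_rule_factor_le:
  assumes w: "cmod w < 1" and u: "cmod u < 1"
  shows "cmod (of_real (1 - (cmod w)^2) * d / (1 - cnj w * u)^2) \<le> cmod d * lambdaH u"
proof -
  define a where "a = 1 - (cmod w)^2"
  have a: "a > 0" using norm_sq_less_1[OF w] by (simp add: a_def)
  have D: "(cmod (1 - cnj w * u))^2 > 0" using one_minus_cnj_mult_nonzero[OF w u] by simp
  have "a * (1 - (cmod u)^2) \<le> 2 * (cmod (1 - cnj w * u))^2"
    using norm_one_minus_cnj_mult_sq_ge[of w u] D unfolding a_def by linarith
  then have le: "a / (cmod (1 - cnj w * u))^2 \<le> lambdaH u"
    using D norm_sq_less_1[OF u] by (simp add: lambdaH_def field_simps)
  have "cmod (of_real a * d / (1 - cnj w * u)^2) = a / (cmod (1 - cnj w * u))^2 * cmod d"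
    using a by (simp add: norm_divide norm_mult norm_power)
  also have "\<dots> \<le> lambdaH u * cmod d"
    by (rule mult_right_mono[OF le]) simp
  finally show ?thesis by (simp add: a_def mult.commute)
qed

lemma normHH_sq_le:
  assumes f: "f holomorphic_on ball 0 1" and into: "f ` ball 0 1 \<subseteq> ball 0 1" and z: "cmod z < 1"
  shows "ennreal ((normHH f z)^2) \<le> 768 * (\<integral>\<^sup>+ v. ennreal ((cmod (deriv f v))^2 * (lambdaH (f v))^2)
                                             * indicator (disc_square z) v \<partial>lborel)"
proof -
  have f_into: "cmod (f \<zeta>) < 1" if "cmod \<zeta> < 1" for \<zeta> using into that by (auto simp: image_subset_iff)
  define w where "w = f z"
  have w: "cmod w < 1" using f_into[OF z] by (simp add: w_def)
  define a where "a = 1 - (cmod w)^2"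
  have a: "a > 0" using norm_sq_less_1[OF w] by (simp add: a_def)
  \<comment> \<open>the derivative of \<open>f\<close> followed by the disc automorphism sending \<open>w\<close> to \<open>0\<close>\<close>
  define G where "G \<zeta> = of_real a * deriv f \<zeta> / (1 - cnj w * f \<zeta>)^2" for \<zeta>
  have "G holomorphic_on ball 0 1"
    unfolding G_def[abs_def] using one_minus_cnj_mult_nonzero[OF w f_into]
    by (intro holomorphic_intros holomorphic_deriv f) auto
  from norm_sq_weighted_le_disc_square_nn_integral[OF this z]
  have G_bound: "ennreal ((cmod (G z))^2 * (1 - (cmod z)^2)^2)
                   \<le> 768 * (\<integral>\<^sup>+ v. ennreal ((cmod (G v))^2) * indicator (disc_square z) v \<partial>lborel)" .
  have "1 - cnj w * f z = of_real a"
    using complex_norm_square[of w] by (simp add: a_def w_def[symmetric] mult.commute)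
  then have "G z = deriv f z / of_real a"
    using a by (simp add: G_def power2_eq_square)
  then have Gz: "cmod (G z) = cmod (deriv f z) / (1 - (cmod w)^2)"
    using a by (simp add: norm_divide a_def[symmetric])
  have "normHH f z = cmod (G z) * (1 - (cmod z)^2)"
    using a by (simp add: normHH_def lambdaH_def Gz w_def[symmetric] a_def field_simps)
  then have "ennreal ((normHH f z)^2) = ennreal ((cmod (G z))^2 * (1 - (cmod z)^2)^2)"
    by (simp add: power_mult_distrib)
  also have "\<dots> \<le> 768 * (\<integral>\<^sup>+ v. ennreal ((cmod (G v))^2) * indicator (disc_square z) v \<partial>lborel)"
    by (rule G_bound)
  also have "\<dots> \<le> 768 * (\<integral>\<^sup>+ v. ennreal ((cmod (deriv f v))^2 * (lambdaH (f v))^2)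
                                  * indicator (disc_square z) v \<partial>lborel)"
  proof (intro mult_left_mono nn_integral_mono)
    fix v
    show "ennreal ((cmod (G v))^2) * indicator (disc_square z) v
            \<le> ennreal ((cmod (deriv f v))^2 * (lambdaH (f v))^2) * indicator (disc_square z) v"
    proof (cases "v \<in> disc_square z")
      case True
      then have v: "cmod v < 1" using disc_square_subset_disc[OF z] by auto
      have "cmod (G v) \<le> cmod (deriv f v) * lambdaH (f v)"
        unfolding G_def a_def by (rule norm_Moebius_chain_rule_factor_le[OF w f_into[OF v]])
      then have "(cmod (G v))^2 \<le> (cmod (deriv f v) * lambdaH (f v))^2"
        by (intro power_mono) auto
      then show ?thesis using True by (simp add: power_mult_distrib ennreal_leI)
    qed simp
  qed simp
  finally show ?thesis .
qed

lemma ray_integral_normHH_little_o: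
  fixes f :: "complex \<Rightarrow> complex"
  assumes "\<alpha> > 1" and "f analytic_on ball 0 1" and into: "f ` ball 0 1 \<subseteq> ball 0 1"
    and "(\<integral>\<^sup>+ t. areaH f (hball0 t) * ennreal (t powr (-\<alpha>)) * indicator {1..} t \<partial>lborel) < \<infinity>"
  shows "(\<lambda>\<rho>. integral {0..\<rho>} (\<lambda>t. normHH f (hray \<theta> t))) \<in> o[at_top](\<lambda>\<rho>. \<rho> powr (\<alpha> / 2))"
proof -
  have f: "f holomorphic_on ball 0 1" using assms(2) analytic_imp_holomorphic by blast
  have cont_deriv: "continuous_on (ball 0 1) (deriv f)"
    by (rule holomorphic_on_imp_continuous_on[OF holomorphic_deriv[OF f]]) simp
  have cont_lambdaH_f: "continuous_on (ball 0 1) (\<lambda>z. lambdaH (f z))"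
    by (rule continuous_on_compose2[OF continuous_on_lambdaH holomorphic_on_imp_continuous_on[OF f] into])
  have f_into: "cmod (f z) < 1" if "cmod z < 1" for z using into that by (auto simp: image_subset_iff)
  interpret ray_length_estimate "\<lambda>z. (cmod (deriv f z))^2 * (lambdaH (f z))^2" "normHH f" \<alpha> 768
  proof unfold_locales
    show "continuous_on (ball 0 1) (normHH f)"
      unfolding normHH_def[abs_def] using lambdaH_pos
      by (intro continuous_intros continuous_on_lambdaH cont_deriv cont_lambdaH_f)
         (auto simp: less_imp_neq[symmetric])
    show "0 \<le> normHH f z" if "cmod z < 1" for z
      using lambdaH_pos[OF that] lambdaH_pos[OF f_into[OF that]] by (simp add: normHH_def)
  qed (use assms(1,4) normHH_sq_le[OF f into] in
         \<open>auto simp: areaH_def intro!: continuous_intros cont_deriv cont_lambdaH_f\<close>)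
  show ?thesis by (rule ray_integral_little_o)
qed

theorem mainTheorem9:
  fixes \<alpha> :: real and f :: "complex \<Rightarrow> complex"
  assumes "\<alpha> > 1"
  shows
    "(f analytic_on ball 0 1 \<and>
      (\<integral>\<^sup>+ t. areaE f (hball0 t) * ennreal (t powr (-\<alpha>)) * indicator {1..} t \<partial>lborel) < \<infinity>
      \<longrightarrow> (\<forall>\<theta>::real. (\<lambda>\<rho>. integral {0..\<rho>} (\<lambda>t. normHE f (hray \<theta> t)))
                        \<in> o[at_top](\<lambda>\<rho>. \<rho> powr (\<alpha> / 2))))
     \<and>
     (f analytic_on ball 0 1 \<and> f ` ball 0 1 \<subseteq> ball 0 1 \<and>
      (\<integral>\<^sup>+ t. areaH f (hball0 t) * ennreal (t powr (-\<alpha>)) * indicator {1..} t \<partial>lborel) < \<infinity>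
      \<longrightarrow> (\<forall>\<theta>::real. (\<lambda>\<rho>. integral {0..\<rho>} (\<lambda>t. normHH f (hray \<theta> t)))
                        \<in> o[at_top](\<lambda>\<rho>. \<rho> powr (\<alpha> / 2))))"
  using ray_integral_normHE_little_o[OF assms] ray_integral_normHH_little_o[OF assms] by blast

end
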